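(* Let $T$ be a rooted binary tree with $n\ge 2$ leaves, let $T=(T_a,T_b)$ be its standard decomposition with $n_a\ge n_b$ leaves respectively, and let $k=\lceil\log_2 n\rceil$. Then $T$ has minimal Sackin index among trees with $n$ leaves if and only if $T_a$ and $T_b$ have minimal Sackin index among trees with $n_a$ and $n_b$ leaves respectively and $n_a-n_b\le\min\{n-2^{k-1},\,2^k-n\}$.
   Context: A rooted binary tree is either a single vertex (both root and leaf), or a finite tree with a distinguished root of degree 2 whose other non-leaf vertices have degree 3. The standard decomposition $T=(T_a,T_b)$ lists the subtrees rooted at the two children of the root. The Sackin index is $\mathcal S(T)=\sum_{x\text{ leaf}}\delta_x$, with $\delta_x$ the number of edges from the root to $x$. *)

theory Defs
  imports Complex_Main
begin

datatype btree = Leaf | Node btree btree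

fun leaves :: "btree \<Rightarrow> nat" where
  "leaves Leaf = 1"
| "leaves (Node l r) = leaves l + leaves r"

fun leaf_depths :: "btree \<Rightarrow> nat list" where
  "leaf_depths Leaf = [0]"
| "leaf_depths (Node l r) = map Suc (leaf_depths l) @ map Suc (leaf_depths r)"

definition sackin :: "btree \<Rightarrow> nat" where
  "sackin T = sum_list (leaf_depths T)"

definition min_sackin :: "btree \<Rightarrow> bool" where
  "min_sackin T \<longleftrightarrow> (\<forall>T'. leaves T' = leaves T \<longrightarrow> sackin T \<le> sackin T')"

end

theory Submission
  imports Defs
begin

text \<open>For every \<open>j\<close>, \<open>m (j + 1) - 2^j\<close> is a lower bound for the Sackin index of a tree
  with \<open>m\<close> leaves: the bound for \<open>j + 1\<close> at \<open>m = m\<^sub>a + m\<^sub>b\<close> is the sum of the bounds for \<open>j\<close>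
  at \<open>m\<^sub>a\<close> and \<open>m\<^sub>b\<close> plus \<open>m\<close>, exactly as the Sackin index decomposes at the root. The
  bound is attained, by a balanced tree, precisely when \<open>2^(j-1) \<le> m \<le> 2^j\<close>, so with
  \<open>k = \<lceil>log\<^sub>2 n\<rceil>\<close> a tree with \<open>n\<close> leaves is minimal iff it attains the bound for \<open>k\<close>.
  As each subtree dominates its own bound for \<open>k - 1\<close>, this happens iff both subtrees
  attain it, i.e. are minimal with \<open>2^(k-2) \<le> n\<^sub>b \<le> n\<^sub>a \<le> 2^(k-1)\<close>, which for
  \<open>n\<^sub>a \<ge> n\<^sub>b\<close> is the stated inequality.\<close>

lemma sum_list_map_Suc: "sum_list (map Suc xs) = sum_list xs + length xs"
  by (induction xs) auto

lemma length_leaf_depths: "length (leaf_depths T) = leaves T"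
  by (induction T) auto

lemma sackin_Leaf [simp]: "sackin Leaf = 0"
  by (simp add: sackin_def)

lemma sackin_Node [simp]: "sackin (Node l r) = sackin l + sackin r + leaves l + leaves r"
  by (simp add: sackin_def sum_list_map_Suc length_leaf_depths)

lemma leaves_ge_1: "leaves T \<ge> 1"
  by (induction T) auto

definition sackin_bound :: "nat \<Rightarrow> nat \<Rightarrow> int" where
  "sackin_bound j m = int m * (int j + 1) - 2 ^ j"

lemma sackin_bound_Suc_add:
  "sackin_bound (Suc j) (a + b) = sackin_bound j a + sackin_bound j b + int a + int b"
  by (simp add: sackin_bound_def algebra_simps)

lemma sackin_bound_Suc: "sackin_bound (Suc j) m = sackin_bound j m + int m - 2 ^ j"
  by (simp add: sackin_bound_def algebra_simps)

lemma sackin_ge_bound: "sackin_bound j (leaves T) \<le> int (sackin T)"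
proof (induction T arbitrary: j)
  case Leaf
  have "int j + 1 \<le> 2 ^ j"
    by (induction j) auto
  then show ?case by (simp add: sackin_bound_def)
next
  case (Node l r)
  show ?case
  proof (cases j)
    case 0
    then show ?thesis
      using Node.IH[of 0] leaves_ge_1[of l] leaves_ge_1[of r] by (simp add: sackin_bound_def)
  next
    case (Suc i)
    then show ?thesis
      using Node.IH[of i] sackin_bound_Suc_add[of i "leaves l" "leaves r"] by simp
  qed
qed

lemma ex_sackin_eq_bound:
  assumes "m \<ge> 1" "2 ^ j \<le> 2 * m" "m \<le> 2 ^ j"
  shows "\<exists>T. leaves T = m \<and> int (sackin T) = sackin_bound j m"
  using assms
proof (induction m arbitrary: j rule: less_induct)
  case (less m)
  show ?case
  proof (cases "m = 1")
    case True
    have "j < 2"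
    proof (rule ccontr)
      assume "\<not> j < 2"
      then have "(2::nat) ^ 2 \<le> 2 ^ j" by (intro power_increasing) auto
      then show False using less.prems True by simp
    qed
    then have "j = 0 \<or> j = 1" by auto
    then show ?thesis
      using True by (auto intro!: exI[of _ Leaf] simp: sackin_bound_def)
  next
    case False
    then have "m \<ge> 2" using less.prems by simp
    then obtain i where j: "j = Suc i"
      using less.prems by (cases j) auto
    define a where "a = m - m div 2"
    define b where "b = m div 2"
    have ab: "a + b = m" "1 \<le> b" "b \<le> a" "a < m" "b < m"
      using \<open>m \<ge> 2\<close> unfolding a_def b_def by auto
    define P where "P = (2::nat) ^ i"
    have "P = 1 \<or> even P"
      unfolding P_def by (cases i) auto
    moreover have "P \<le> m" "m \<le> 2 * P"
      using less.prems unfolding P_def j by auto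
    \<comment> \<open>for odd \<open>m\<close> the smaller half is \<open>(m - 1) / 2\<close>; parity of \<open>P\<close> keeps it \<open>\<ge> P / 2\<close>\<close>
    ultimately have "P \<le> 2 * b" "a \<le> P"
      using \<open>m \<ge> 2\<close> unfolding a_def b_def by presburger+
    then have a: "1 \<le> a" "2 ^ i \<le> 2 * a" "a \<le> 2 ^ i"
      and b: "1 \<le> b" "2 ^ i \<le> 2 * b" "b \<le> 2 ^ i"
      using ab unfolding P_def by linarith+
    obtain Ta where Ta: "leaves Ta = a" "int (sackin Ta) = sackin_bound i a"
      using less.IH[OF \<open>a < m\<close> a] by blast
    obtain Tb where Tb: "leaves Tb = b" "int (sackin Tb) = sackin_bound i b"
      using less.IH[OF \<open>b < m\<close> b] by blast
    have "sackin_bound j m = sackin_bound i a + sackin_bound i b + int a + int b"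
      using sackin_bound_Suc_add[of i a b] unfolding j ab(1) .
    then have "int (sackin (Node Ta Tb)) = sackin_bound j m"
      using Ta Tb by simp
    moreover have "leaves (Node Ta Tb) = m"
      using Ta Tb ab by simp
    ultimately show ?thesis by blast
  qed
qed

text \<open>The bounds for \<open>j - 1\<close> and \<open>j + 1\<close> cannot exceed an attained bound for \<open>j\<close>.\<close>

lemma sackin_eq_bound_imp_range:
  assumes "int (sackin T) = sackin_bound j (leaves T)"
  shows "2 ^ j \<le> 2 * leaves T" "leaves T \<le> 2 ^ j"
proof -
  show "2 ^ j \<le> 2 * leaves T"
  proof (cases j)
    case 0
    then show ?thesis using leaves_ge_1[of T] by simp
  next
    case (Suc i)
    then have "sackin_bound i (leaves T) \<le> sackin_bound (Suc i) (leaves T)"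
      using sackin_ge_bound[of i T] assms by simp
    then show ?thesis
      using Suc sackin_bound_Suc[of i "leaves T"] by simp
  qed
  have "sackin_bound (Suc j) (leaves T) \<le> sackin_bound j (leaves T)"
    using sackin_ge_bound[of "Suc j" T] assms by simp
  then show "leaves T \<le> 2 ^ j"
    using sackin_bound_Suc[of j "leaves T"] by simp
qed

lemma min_sackin_iff_sackin_eq_bound:
  assumes "2 ^ j \<le> 2 * leaves T" "leaves T \<le> 2 ^ j"
  shows "min_sackin T \<longleftrightarrow> int (sackin T) = sackin_bound j (leaves T)"
proof
  obtain T' where T': "leaves T' = leaves T" "int (sackin T') = sackin_bound j (leaves T)"
    using ex_sackin_eq_bound assms leaves_ge_1 by blast
  assume "min_sackin T"
  then have "sackin T \<le> sackin T'"
    using T' unfolding min_sackin_def by simp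
  then show "int (sackin T) = sackin_bound j (leaves T)"
    using sackin_ge_bound[of j T] T' by linarith
next
  assume "int (sackin T) = sackin_bound j (leaves T)"
  then show "min_sackin T"
    unfolding min_sackin_def using sackin_ge_bound[of j] by (metis of_nat_le_iff)
qed

lemma sackin_eq_bound_iff:
  "int (sackin T) = sackin_bound j (leaves T) \<longleftrightarrow>
     min_sackin T \<and> 2 ^ j \<le> 2 * leaves T \<and> leaves T \<le> 2 ^ j"
  using sackin_eq_bound_imp_range min_sackin_iff_sackin_eq_bound by blast

lemma min_sackin_Node_iff:
  assumes "2 ^ i \<le> leaves l + leaves r" "leaves l + leaves r \<le> 2 ^ Suc i"
  shows "min_sackin (Node l r) \<longleftrightarrow>
           min_sackin l \<and> 2 ^ i \<le> 2 * leaves l \<and> leaves l \<le> 2 ^ i \<and>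
           min_sackin r \<and> 2 ^ i \<le> 2 * leaves r \<and> leaves r \<le> 2 ^ i"
proof -
  have "min_sackin (Node l r) \<longleftrightarrow>
          int (sackin (Node l r)) = sackin_bound (Suc i) (leaves (Node l r))"
    using assms by (intro min_sackin_iff_sackin_eq_bound) auto
  also have "\<dots> \<longleftrightarrow> int (sackin l) = sackin_bound i (leaves l) \<and>
                     int (sackin r) = sackin_bound i (leaves r)"
    using sackin_bound_Suc_add[of i "leaves l" "leaves r"]
      sackin_ge_bound[of i l] sackin_ge_bound[of i r] by auto
  finally show ?thesis
    unfolding sackin_eq_bound_iff by blast
qed

lemma nat_ceiling_log2_eq:
  assumes "2 ^ i < n" "n \<le> 2 ^ Suc i"
  shows "nat \<lceil>log 2 (real n)\<rceil> = Suc i"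
  using ceiling_log_nat_eq_if[of 2 i n] assms by simp

theorem mainTheorem15:
  fixes T Ta Tb :: btree and n k :: nat
  assumes "T = Node Ta Tb"
    and "leaves Ta \<ge> leaves Tb"
    and "n = leaves T"
    and "k = nat \<lceil>log 2 (real n)\<rceil>"
  shows "min_sackin T \<longleftrightarrow>
           (min_sackin Ta \<and> min_sackin Tb \<and>
            int (leaves Ta) - int (leaves Tb)
              \<le> min (int n - 2 ^ (k - 1)) (2 ^ k - int n))"
proof -
  define a where "a = leaves Ta"
  define b where "b = leaves Tb"
  have n: "n = a + b"
    using assms(1,3) unfolding a_def b_def by simp
  then obtain i where i: "2 ^ i < n" "n \<le> 2 ^ Suc i"
    using ex_power_ivl2[of 2 n] leaves_ge_1[of Ta] leaves_ge_1[of Tb] unfolding a_def b_def by auto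
  then have k: "k = Suc i"
    using assms(4) nat_ceiling_log2_eq by simp
  define P where "P = (2::nat) ^ i"
  have "(2::int) ^ (k - 1) = int P" "(2::int) ^ k = 2 * int P"
    unfolding k P_def by simp_all
  then have "int a - int b \<le> min (int n - 2 ^ (k - 1)) (2 ^ k - int n) \<longleftrightarrow>
               P \<le> 2 * b \<and> a \<le> P"
    unfolding n by arith
  moreover have "min_sackin T \<longleftrightarrow>
      min_sackin Ta \<and> P \<le> 2 * a \<and> a \<le> P \<and> min_sackin Tb \<and> P \<le> 2 * b \<and> b \<le> P"
    using min_sackin_Node_iff[of i Ta Tb] i
    unfolding assms(1) n a_def b_def P_def by simp
  moreover have "b \<le> a"
    using assms(2) unfolding a_def b_def .
  ultimately show ?thesis
    unfolding a_def b_def by auto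
qed

end
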